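(* Let $f:\mathbb{R}^n\to\mathbb{R}\cup\{\infty\}$ be a proper lower semicontinuous function with $\bar x\in\operatorname{dom} f$ and $0\in\partial f(\bar x)$, and suppose $f$ is subdifferentially continuous, prox-regular, and twice epi-differentiable at $\bar x$ for $0$. Then $\bar x$ is a strong local minimizer of $f$ if and only if the sufficient condition of the second kind holds at $\bar x$, i.e., there exists $\kappa>0$ such that for each $w\in\operatorname{dom}D(\partial_p f)(\bar x|0)$ with $\|w\|=1$ there exists $z\in D(\partial_p f)(\bar x|0)(w)$ with $\langle z,w\rangle\ge\kappa$.
   Context: Limiting subdifferential $\partial f$, proximal subdifferential $\partial_p f(\bar x)=\{v\mid \liminf_{x\to\bar x}\frac{f(x)-f(\bar x)-\langle v,x-\bar x\rangle}{\|x-\bar x\|^2}>-\infty\}$. $D(\partial_p f)(\bar x|0)(w)=\{z\mid (w,z)\in T_{\operatorname{gph}\partial_p f}(\bar x,0)\}$ with $T$ the contingent cone $T_\Omega(\bar u)=\{v\mid \exists t_k\downarrow0,\ v_k\to v,\ \bar u+t_kv_k\in\Omega\}$. Prox-regularity at $\bar x$ for $\bar v$: there are $r,\varepsilon>0$ with $f(x)\ge f(u)+\langle v,x-u\rangle-\frac r2\|x-u\|^2$ for $x,u\in\mathbb{B}_\varepsilon(\bar x)$, $|f(u)-f(\bar x)|<\varepsilon$, $v\in\partial f(u)\cap\mathbb{B}_\varepsilon(\bar v)$. Subdifferential continuity: $(x_k,v_k)\to(\bar x,\bar v)$, $v_k\in\partial f(x_k)$ imply $f(x_k)\to f(\bar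 x)$. Twice epi-differentiability at $\bar x$ for $v$: for every $w$ and $\tau_k\downarrow0$ there are $w^k\to w$ with $\frac{f(\bar x+\tau_kw^k)-f(\bar x)-\tau_k\langle v,w^k\rangle}{\tau_k^2/2}\to d^2f(\bar x|v)(w)$, where $d^2f(\bar x|v)(w)=\liminf_{\tau\downarrow0,w'\to w}\frac{f(\bar x+\tau w')-f(\bar x)-\tau\langle v,w'\rangle}{\tau^2/2}$. Strong local minimizer: $f(x)-f(\bar x)\ge\frac\kappa2\|x-\bar x\|^2$ near $\bar x$ for some $\kappa>0$. *)

theory Defs
  imports "HOL-Analysis.Analysis" "HOL-Library.Extended_Real"
begin

definition proper_fun :: "('a \<Rightarrow> ereal) \<Rightarrow> bool" where
  "proper_fun f \<longleftrightarrow> (\<forall>x. f x \<noteq> -\<infinity>) \<and> (\<exists>x. f x \<noteq> \<infinity>)"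

definition lsc_fun :: "('a::topological_space \<Rightarrow> ereal) \<Rightarrow> bool" where
  "lsc_fun f \<longleftrightarrow> (\<forall>x. f x \<le> Liminf (at x) f)"

definition edom :: "('a \<Rightarrow> ereal) \<Rightarrow> 'a set" where
  "edom f = {x. f x < \<infinity>}"

definition frechet_subdiff :: "('a::real_inner \<Rightarrow> ereal) \<Rightarrow> 'a \<Rightarrow> 'a set" where
  "frechet_subdiff f xb = {v. \<bar>f xb\<bar> \<noteq> \<infinity> \<and>
     Liminf (at xb) (\<lambda>x. (f x - f xb - ereal (inner v (x - xb))) / ereal (norm (x - xb))) \<ge> 0}"

definition limiting_subdiff :: "('a::real_inner \<Rightarrow> ereal) \<Rightarrow> 'a \<Rightarrow> 'a set" where
  "limiting_subdiff f xb = {v. \<bar>f xb\<bar> \<noteq> \<infinity> \<and>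
     (\<exists>xs vs. xs \<longlonglongrightarrow> xb \<and> (\<lambda>k. f (xs k)) \<longlonglongrightarrow> f xb \<and> vs \<longlonglongrightarrow> v \<and>
        (\<forall>k. vs k \<in> frechet_subdiff f (xs k)))}"

definition prox_subdiff :: "('a::real_inner \<Rightarrow> ereal) \<Rightarrow> 'a \<Rightarrow> 'a set" where
  "prox_subdiff f xb = {v. \<bar>f xb\<bar> \<noteq> \<infinity> \<and>
     Liminf (at xb) (\<lambda>x. (f x - f xb - ereal (inner v (x - xb))) / ereal ((norm (x - xb))\<^sup>2)) > -\<infinity>}"

definition graph_of :: "('a \<Rightarrow> 'b set) \<Rightarrow> ('a \<times> 'b) set" where
  "graph_of F = {(x, y). y \<in> F x}"

definition contingent_cone :: "'a::real_normed_vector set \<Rightarrow> 'a \<Rightarrow> 'a set" where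
  "contingent_cone \<Omega> u = {v. \<exists>t vs. (\<forall>k. t k > 0) \<and> t \<longlonglongrightarrow> 0 \<and> vs \<longlonglongrightarrow> v \<and>
       (\<forall>k. u + t k *\<^sub>R vs k \<in> \<Omega>)}"

definition graphical_deriv :: "('a::real_normed_vector \<Rightarrow> 'b::real_normed_vector set) \<Rightarrow> 'a \<Rightarrow> 'b \<Rightarrow> 'a \<Rightarrow> 'b set" where
  "graphical_deriv F x y w = {z. (w, z) \<in> contingent_cone (graph_of F) (x, y)}"

definition sdom :: "('a \<Rightarrow> 'b set) \<Rightarrow> 'a set" where
  "sdom F = {w. F w \<noteq> {}}"

definition prox_regular_at :: "('a::real_inner \<Rightarrow> ereal) \<Rightarrow> 'a \<Rightarrow> 'a \<Rightarrow> bool" where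
  "prox_regular_at f xb vb \<longleftrightarrow> (\<exists>r>0. \<exists>\<epsilon>>0. \<forall>x u v.
     x \<in> cball xb \<epsilon> \<longrightarrow> u \<in> cball xb \<epsilon> \<longrightarrow> \<bar>f u - f xb\<bar> < ereal \<epsilon> \<longrightarrow>
     v \<in> limiting_subdiff f u \<longrightarrow> v \<in> cball vb \<epsilon> \<longrightarrow>
     f x \<ge> f u + ereal (inner v (x - u)) - ereal (r / 2 * (norm (x - u))\<^sup>2))"

definition subdiff_continuous_at :: "('a::real_inner \<Rightarrow> ereal) \<Rightarrow> 'a \<Rightarrow> 'a \<Rightarrow> bool" where
  "subdiff_continuous_at f xb vb \<longleftrightarrow> (\<forall>xs vs. xs \<longlonglongrightarrow> xb \<longrightarrow> vs \<longlonglongrightarrow> vb \<longrightarrow>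
     (\<forall>k. vs k \<in> limiting_subdiff f (xs k)) \<longrightarrow> (\<lambda>k. f (xs k)) \<longlonglongrightarrow> f xb)"

definition second_dq :: "('a::real_inner \<Rightarrow> ereal) \<Rightarrow> 'a \<Rightarrow> 'a \<Rightarrow> real \<Rightarrow> 'a \<Rightarrow> ereal" where
  "second_dq f xb v \<tau> w = (f (xb + \<tau> *\<^sub>R w) - f xb - ereal (\<tau> * inner v w)) / ereal (\<tau>\<^sup>2 / 2)"

definition second_subderiv :: "('a::real_inner \<Rightarrow> ereal) \<Rightarrow> 'a \<Rightarrow> 'a \<Rightarrow> 'a \<Rightarrow> ereal" where
  "second_subderiv f xb v w = Liminf (at_right 0 \<times>\<^sub>F nhds w) (\<lambda>(\<tau>, w'). second_dq f xb v \<tau> w')"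

definition twice_epi_diff_at :: "('a::real_inner \<Rightarrow> ereal) \<Rightarrow> 'a \<Rightarrow> 'a \<Rightarrow> bool" where
  "twice_epi_diff_at f xb v \<longleftrightarrow> (\<forall>w \<tau>. (\<forall>k. \<tau> k > 0) \<longrightarrow> \<tau> \<longlonglongrightarrow> 0 \<longrightarrow>
     (\<exists>ws. ws \<longlonglongrightarrow> w \<and> (\<lambda>k. second_dq f xb v (\<tau> k) (ws k)) \<longlonglongrightarrow> second_subderiv f xb v w))"

definition strong_local_min :: "('a::real_normed_vector \<Rightarrow> ereal) \<Rightarrow> 'a \<Rightarrow> bool" where
  "strong_local_min f xb \<longleftrightarrow> (\<exists>\<kappa>>0. \<exists>\<delta>>0. \<forall>x\<in>ball xb \<delta>.
     f x - f xb \<ge> ereal (\<kappa> / 2 * (norm (x - xb))\<^sup>2))"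

end

theory Submission
  imports Defs
begin

text \<open>Both directions run through the second subderivative d = d^2f(xb|0). If z is a graphical
  derivative of the proximal subdifferential at (xb, 0) in direction w, then d(w) = \<langle>z, w\<rangle>:
  the points of the graph that realise z, fed into the prox-regularity inequality at test points
  xb + \<sigma> t y (with y taken from twice epi-differentiability), give
  d(w) \<le> \<sigma>^2 d(w) - 2 (\<sigma> - 1) \<langle>z, w\<rangle> + r (\<sigma> - 1)^2 |w|^2 for all \<sigma> > 0; the difference of the
  two sides is a nonnegative quadratic in \<sigma> vanishing at \<sigma> = 1, so its derivative
  2 d(w) - 2 \<langle>z, w\<rangle> there is 0. A strong local minimizer has d \<ge> \<kappa> |\<cdot>|^2, which gives the condition.
  Conversely, if points x_k \<rightarrow> xb violate quadratic growth with moduli e_k \<rightarrow> 0, minimising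
  f + (2r + 2) |\<cdot> - x_k|^2 near xb yields proximal subgradients whose rescaled limit is a graphical
  derivative in a direction w \<noteq> 0 with d(w) \<le> 0, contradicting d(w) \<ge> \<kappa> |w|^2.\<close>

lemma less_div_of_less_div_square:
  fixes a n d z :: real
  assumes "a < n / d\<^sup>2" "0 < d" "d < - z / (\<bar>a\<bar> + 1)" "z < 0"
  shows "z < n / d"
proof -
  have "a * d < n / d" using assms(1,2) by (simp add: field_simps power2_eq_square)
  moreover have "- (\<bar>a\<bar> * d) \<le> a * d" using assms(2) by (cases "a \<ge> 0") auto
  moreover have "\<bar>a\<bar> * d \<le> \<bar>a\<bar> * (- z / (\<bar>a\<bar> + 1))" using assms(3) by (intro mult_left_mono) auto
  moreover have "\<bar>a\<bar> * (- z / (\<bar>a\<bar> + 1)) \<le> - z" using assms(4) by (simp add: field_simps)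
  ultimately show ?thesis by linarith
qed

lemma prox_subdiff_subset_frechet_subdiff:
  fixes f :: "'a::real_inner \<Rightarrow> ereal"
  shows "prox_subdiff f u \<subseteq> frechet_subdiff f u"
proof
  fix v assume v: "v \<in> prox_subdiff f u"
  define N where "N x = f x - f u - ereal (inner v (x - u))" for x
  have fu: "\<bar>f u\<bar> \<noteq> \<infinity>"
    and "-\<infinity> < Liminf (at u) (\<lambda>x. N x / ereal ((norm (x - u))\<^sup>2))"
    using v unfolding prox_subdiff_def N_def by auto
  then obtain a where "ereal a < Liminf (at u) (\<lambda>x. N x / ereal ((norm (x - u))\<^sup>2))"
    using ereal_dense2 by blast
  then have quad: "eventually (\<lambda>x. ereal a < N x / ereal ((norm (x - u))\<^sup>2)) (at u)"
    using less_LiminfD by blast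
  have "0 \<le> Liminf (at u) (\<lambda>x. N x / ereal (norm (x - u)))"
  proof (subst le_Liminf_iff, intro allI impI)
    fix y :: ereal assume "y < 0"
    then obtain z where z: "y < ereal z" "z < 0" using ereal_dense2 by fastforce
    define \<eta> where "\<eta> = - z / (\<bar>a\<bar> + 1)"
    have "\<eta> > 0" using z by (simp add: \<eta>_def divide_neg_pos add_nonneg_pos)
    then have near: "eventually (\<lambda>x. 0 < norm (x - u) \<and> norm (x - u) < \<eta>) (at u)"
      unfolding eventually_at by (auto simp: dist_norm intro!: exI[of _ \<eta>])
    show "eventually (\<lambda>x. y < N x / ereal (norm (x - u))) (at u)"
      using eventually_conj[OF quad near]
    proof (rule eventually_mono)
      fix x assume x: "ereal a < N x / ereal ((norm (x - u))\<^sup>2) \<and> 0 < norm (x - u) \<and> norm (x - u) < \<eta>"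
      define d where "d = norm (x - u)"
      have quad_x: "ereal a < N x / ereal (d\<^sup>2)" and d: "0 < d" "d < \<eta>"
        unfolding d_def using x by blast+
      show "y < N x / ereal (norm (x - u))"
        unfolding d_def[symmetric]
      proof (cases "N x")
        case (real n)
        have "a < n / d\<^sup>2" using quad_x real d by simp
        then have "z < n / d"
          using less_div_of_less_div_square d(1) d(2)[unfolded \<eta>_def] z(2) by blast
        then show "y < N x / ereal d" using order.strict_trans[OF z(1)] real d by simp
      qed (use quad_x d z in auto)
    qed
  qed
  then show "v \<in> frechet_subdiff f u" using fu unfolding frechet_subdiff_def N_def by auto
qed

lemma prox_subdiff_subset_limiting_subdiff:
  fixes f :: "'a::real_inner \<Rightarrow> ereal"
  shows "prox_subdiff f u \<subseteq> limiting_subdiff f u"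
proof
  fix v assume v: "v \<in> prox_subdiff f u"
  have "\<bar>f u\<bar> \<noteq> \<infinity>" using v unfolding prox_subdiff_def by simp
  moreover have "v \<in> frechet_subdiff f u" using v prox_subdiff_subset_frechet_subdiff by blast
  ultimately show "v \<in> limiting_subdiff f u" unfolding limiting_subdiff_def
    by (intro CollectI conjI exI[of _ "\<lambda>k. u"] exI[of _ "\<lambda>k. v"]) auto
qed

lemma prox_subdiff_of_proximal_local_min:
  fixes f :: "'a::real_inner \<Rightarrow> ereal"
  assumes fu: "f u = ereal U" and "\<rho> > 0"
    and min: "\<And>y. y \<in> ball u \<rho> \<Longrightarrow>
      f u + ereal (\<beta> / 2 * (norm (u - x0))\<^sup>2) \<le> f y + ereal (\<beta> / 2 * (norm (y - x0))\<^sup>2)"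
  shows "- \<beta> *\<^sub>R (u - x0) \<in> prox_subdiff f u"
proof -
  define v where "v = - \<beta> *\<^sub>R (u - x0)"
  have "ereal (- \<beta> / 2) \<le> Liminf (at u) (\<lambda>y. (f y - f u - ereal (inner v (y - u))) / ereal ((norm (y - u))\<^sup>2))"
  proof (rule Liminf_bounded)
    have "eventually (\<lambda>y. y \<noteq> u \<and> y \<in> ball u \<rho>) (at u)"
      using \<open>\<rho> > 0\<close> unfolding eventually_at by (auto simp: dist_commute intro!: exI[of _ \<rho>])
    then show "eventually (\<lambda>y. ereal (- \<beta> / 2) \<le> (f y - f u - ereal (inner v (y - u))) / ereal ((norm (y - u))\<^sup>2)) (at u)"
    proof (rule eventually_mono)
      fix y assume y: "y \<noteq> u \<and> y \<in> ball u \<rho>"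
      then have n: "(norm (y - u))\<^sup>2 > 0" by simp
      have expand: "(norm (y - x0))\<^sup>2 = (norm (y - u))\<^sup>2 + 2 * inner (y - u) (u - x0) + (norm (u - x0))\<^sup>2"
        by (simp add: power2_norm_eq_inner inner_commute algebra_simps)
      show "ereal (- \<beta> / 2) \<le> (f y - f u - ereal (inner v (y - u))) / ereal ((norm (y - u))\<^sup>2)"
      proof (cases "f y")
        case (real Y)
        have "U + \<beta> / 2 * (norm (u - x0))\<^sup>2 \<le> Y + \<beta> / 2 * (norm (y - x0))\<^sup>2"
          using min[of y] y fu real by simp
        then have "- \<beta> / 2 * (norm (y - u))\<^sup>2 \<le> Y - U - inner v (y - u)"
          unfolding expand v_def by (simp add: algebra_simps inner_commute)
        then show ?thesis using real fu n by (simp add: field_simps)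
      qed (use min[of y] y fu n in auto)
    qed
  qed
  then have "-\<infinity> < Liminf (at u) (\<lambda>y. (f y - f u - ereal (inner v (y - u))) / ereal ((norm (y - u))\<^sup>2))"
    by (rule order.strict_trans2[rotated]) simp
  then show ?thesis using fu unfolding prox_subdiff_def v_def by simp
qed

lemma second_dq_zero_eq:
  assumes "f xb = ereal F0" "\<tau> > 0"
  shows "second_dq f xb 0 \<tau> w = (f (xb + \<tau> *\<^sub>R w) - ereal F0) / ereal (\<tau>\<^sup>2 / 2)"
  using assms by (simp add: second_dq_def)

lemma second_dq_ge:
  assumes "f xb = ereal F0" "\<tau> > 0" "ereal (F0 + c * \<tau>\<^sup>2 / 2) \<le> f (xb + \<tau> *\<^sub>R w)"
  shows "ereal c \<le> second_dq f xb 0 \<tau> w"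
proof (cases "f (xb + \<tau> *\<^sub>R w)")
  case (real X)
  then have "c \<le> (X - F0) / (\<tau>\<^sup>2 / 2)" using assms by (simp add: field_simps)
  then show ?thesis using assms real by (simp add: second_dq_zero_eq)
qed (use assms in \<open>simp_all add: second_dq_zero_eq\<close>)

lemma second_dq_le:
  assumes "f xb = ereal F0" "\<tau> > 0" "f (xb + \<tau> *\<^sub>R w) \<le> ereal (F0 + c * \<tau>\<^sup>2 / 2)"
    and "f (xb + \<tau> *\<^sub>R w) \<noteq> -\<infinity>"
  shows "second_dq f xb 0 \<tau> w \<le> ereal c"
proof (cases "f (xb + \<tau> *\<^sub>R w)")
  case (real X)
  then have "(X - F0) / (\<tau>\<^sup>2 / 2) \<le> c" using assms by (simp add: field_simps)
  then show ?thesis using assms real by (simp add: second_dq_zero_eq)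
qed (use assms in simp_all)

lemma second_dq_scaleR:
  assumes "f xb = ereal F0" "\<tau> > 0" "\<sigma> > 0"
  shows "second_dq f xb 0 \<tau> (\<sigma> *\<^sub>R w) = ereal (\<sigma>\<^sup>2) * second_dq f xb 0 (\<sigma> * \<tau>) w"
proof (cases "f (xb + (\<sigma> * \<tau>) *\<^sub>R w)")
  case (real X)
  then show ?thesis using assms by (simp add: second_dq_zero_eq field_simps power_mult_distrib)
qed (use assms in \<open>simp_all add: second_dq_zero_eq mult.commute\<close>)

lemma second_subderiv_le_Liminf:
  assumes "\<And>k. \<tau> k > 0" "\<tau> \<longlonglongrightarrow> 0" "ws \<longlonglongrightarrow> w"
  shows "second_subderiv f xb v w \<le> Liminf sequentially (\<lambda>k. second_dq f xb v (\<tau> k) (ws k))"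
proof (subst le_Liminf_iff, intro allI impI)
  fix y assume "y < second_subderiv f xb v w"
  then have ev: "eventually (\<lambda>p. y < (\<lambda>(\<tau>, w'). second_dq f xb v \<tau> w') p) (at_right 0 \<times>\<^sub>F nhds w)"
    unfolding second_subderiv_def by (rule less_LiminfD)
  have "filterlim (\<lambda>k. (\<tau> k, ws k)) (at_right 0 \<times>\<^sub>F nhds w) sequentially"
    using assms by (intro filterlim_Pair tendsto_imp_filterlim_at_right) auto
  from filterlim_iff[THEN iffD1, OF this, rule_format, OF ev]
  show "eventually (\<lambda>k. y < second_dq f xb v (\<tau> k) (ws k)) sequentially" by simp
qed

lemma second_subderiv_le_of_eventually_le:
  fixes c :: "nat \<Rightarrow> real"
  assumes "\<And>k. \<tau> k > 0" "\<tau> \<longlonglongrightarrow> 0" "ws \<longlonglongrightarrow> w" "c \<longlonglongrightarrow> C"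
    and "eventually (\<lambda>k. second_dq f xb v (\<tau> k) (ws k) \<le> ereal (c k)) sequentially"
  shows "second_subderiv f xb v w \<le> ereal C"
proof -
  have "second_subderiv f xb v w \<le> Liminf sequentially (\<lambda>k. second_dq f xb v (\<tau> k) (ws k))"
    using assms(1-3) by (rule second_subderiv_le_Liminf)
  also have "\<dots> \<le> Liminf sequentially (\<lambda>k. ereal (c k))"
    using assms(5) by (rule Liminf_mono)
  also have "\<dots> = ereal C"
    using assms(4) by (intro lim_imp_Liminf) simp_all
  finally show ?thesis .
qed

lemma second_subderiv_ge_of_quadratic_minorant:
  assumes "f xb = ereal F0" "\<delta> > 0"
    and minor: "\<And>x. x \<in> ball xb \<delta> \<Longrightarrow> ereal (F0 + c / 2 * (norm (x - xb))\<^sup>2) \<le> f x"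
  shows "ereal (c * (norm w)\<^sup>2) \<le> second_subderiv f xb 0 w"
  unfolding second_subderiv_def
proof (subst le_Liminf_iff, intro allI impI)
  fix y assume "y < ereal (c * (norm w)\<^sup>2)"
  define P\<tau> where "P\<tau> \<tau> \<longleftrightarrow> 0 < \<tau> \<and> \<tau> < \<delta> / (norm w + 1)" for \<tau> :: real
  define Pw where "Pw w' \<longleftrightarrow> y < ereal (c * (norm w')\<^sup>2) \<and> norm w' < norm w + 1" for w' :: 'a
  have "((\<lambda>w'. ereal (c * (norm w')\<^sup>2)) \<longlongrightarrow> ereal (c * (norm w)\<^sup>2)) (nhds w)"
    "((\<lambda>w'. norm w') \<longlongrightarrow> norm w) (nhds w)"
    by (intro tendsto_intros filterlim_ident)+
  then have "eventually Pw (nhds w)"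
    unfolding Pw_def using \<open>y < _\<close> by (intro eventually_conj order_tendstoD) auto
  moreover have "eventually P\<tau> (at_right 0)"
  proof -
    have "\<delta> / (norm w + 1) > 0"
      using \<open>\<delta> > 0\<close> by (metis add_nonneg_pos divide_pos_pos norm_ge_zero zero_less_one)
    then show ?thesis unfolding P\<tau>_def
      by (intro eventually_conj eventually_at_right_less) (auto simp: eventually_at_right_field)
  qed
  moreover have "y < second_dq f xb 0 \<tau> w'" if "P\<tau> \<tau>" "Pw w'" for \<tau> w'
  proof -
    have \<tau>: "0 < \<tau>" "\<tau> < \<delta> / (norm w + 1)" and w': "y < ereal (c * (norm w')\<^sup>2)" "norm w' < norm w + 1"
      using that unfolding P\<tau>_def Pw_def by auto
    have "\<tau> * norm w' \<le> \<tau> * (norm w + 1)" using \<tau> w' by (intro mult_left_mono) auto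
    also have "\<dots> < \<delta>" using \<tau> by (simp add: pos_less_divide_eq add_nonneg_pos)
    finally have "\<tau> * norm w' < \<delta>" .
    then have "xb + \<tau> *\<^sub>R w' \<in> ball xb \<delta>" using \<tau> by (simp add: dist_norm)
    from minor[OF this] \<tau>
    have "ereal (F0 + c * (norm w')\<^sup>2 * \<tau>\<^sup>2 / 2) \<le> f (xb + \<tau> *\<^sub>R w')"
      by (simp add: power_mult_distrib mult_ac)
    then have "ereal (c * (norm w')\<^sup>2) \<le> second_dq f xb 0 \<tau> w'"
      using \<tau> by (intro second_dq_ge[where f = f and xb = xb, OF \<open>f xb = ereal F0\<close>]) auto
    then show ?thesis using w' by auto
  qed
  ultimately show "eventually (\<lambda>p. y < (\<lambda>(\<tau>, w'). second_dq f xb 0 \<tau> w') p) (at_right 0 \<times>\<^sub>F nhds w)"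
    unfolding eventually_prod_filter by (intro exI[of _ P\<tau>] exI[of _ Pw]) auto
qed

lemma graphical_derivE:
  assumes "z \<in> graphical_deriv F x y w"
  obtains t ws zs where "\<And>k. t k > 0" "t \<longlonglongrightarrow> 0" "ws \<longlonglongrightarrow> w" "zs \<longlonglongrightarrow> z"
    "\<And>k. y + t k *\<^sub>R zs k \<in> F (x + t k *\<^sub>R ws k)"
proof -
  obtain t vs where t: "\<And>k. t k > 0" "t \<longlonglongrightarrow> 0" "vs \<longlonglongrightarrow> (w, z)"
    and graph: "\<And>k. (x, y) + t k *\<^sub>R vs k \<in> graph_of F"
    using assms unfolding graphical_deriv_def contingent_cone_def by blast
  show ?thesis
  proof (rule that[OF t(1,2)])
    show "(\<lambda>k. fst (vs k)) \<longlonglongrightarrow> w" "(\<lambda>k. snd (vs k)) \<longlonglongrightarrow> z"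
      using tendsto_fst[OF t(3)] tendsto_snd[OF t(3)] by simp_all
    show "y + t k *\<^sub>R snd (vs k) \<in> F (x + t k *\<^sub>R fst (vs k))" for k
      using graph[of k] by (cases "vs k") (simp add: graph_of_def)
  qed
qed

lemma graphical_derivI:
  assumes "\<And>k. t k > 0" "t \<longlonglongrightarrow> 0" "ws \<longlonglongrightarrow> w" "zs \<longlonglongrightarrow> z"
    and "\<And>k. y + t k *\<^sub>R zs k \<in> F (x + t k *\<^sub>R ws k)"
  shows "z \<in> graphical_deriv F x y w"
  unfolding graphical_deriv_def contingent_cone_def
proof (intro CollectI exI conjI allI)
  show "(\<lambda>k. (ws k, zs k)) \<longlonglongrightarrow> (w, z)" using assms(3,4) by (rule tendsto_Pair)
  show "(x, y) + t k *\<^sub>R (ws k, zs k) \<in> graph_of F" for k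
    using assms(5)[of k] by (simp add: graph_of_def)
qed (use assms(1,2) in auto)

lemma graphical_deriv_scaleR:
  assumes "z \<in> graphical_deriv F x y w" "c > 0"
  shows "c *\<^sub>R z \<in> graphical_deriv F x y (c *\<^sub>R w)"
proof -
  obtain t ws zs where t: "\<And>k. t k > 0" "t \<longlonglongrightarrow> 0" "ws \<longlonglongrightarrow> w" "zs \<longlonglongrightarrow> z"
    and graph: "\<And>k. y + t k *\<^sub>R zs k \<in> F (x + t k *\<^sub>R ws k)"
    using assms(1) by (elim graphical_derivE) blast
  show ?thesis
  proof (rule graphical_derivI[where t = "\<lambda>k. t k / c"])
    show "(\<lambda>k. t k / c) \<longlonglongrightarrow> 0" using tendsto_divide[OF t(2) tendsto_const, of c] \<open>c > 0\<close> by simp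
    show "(\<lambda>k. c *\<^sub>R ws k) \<longlonglongrightarrow> c *\<^sub>R w" "(\<lambda>k. c *\<^sub>R zs k) \<longlonglongrightarrow> c *\<^sub>R z"
      using t(3,4) by (auto intro: tendsto_scaleR)
    show "y + (t k / c) *\<^sub>R (c *\<^sub>R zs k) \<in> F (x + (t k / c) *\<^sub>R (c *\<^sub>R ws k))" for k
      using graph[of k] \<open>c > 0\<close> by simp
  qed (use t(1) \<open>c > 0\<close> in simp)
qed

lemma eq_of_quadratic_ge_at_one:
  fixes P p c :: real
  assumes ge: "\<And>\<sigma>. \<sigma> > 0 \<Longrightarrow> P \<le> \<sigma>\<^sup>2 * P - 2 * (\<sigma> - 1) * p + c * (\<sigma> - 1)\<^sup>2"
  shows "p = P"
proof -
  define h where "h \<sigma> = (\<sigma> + 1) * P - 2 * p + c * (\<sigma> - 1)" for \<sigma>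
  have factor: "\<sigma>\<^sup>2 * P - 2 * (\<sigma> - 1) * p + c * (\<sigma> - 1)\<^sup>2 - P = (\<sigma> - 1) * h \<sigma>" for \<sigma>
    unfolding h_def by (simp add: algebra_simps power2_eq_square)
  have h_lim: "(h \<longlongrightarrow> 2 * P - 2 * p) (at 1 within S)" for S
    unfolding h_def by (auto intro!: tendsto_eq_intros)
  have "0 \<le> 2 * P - 2 * p"
  proof (rule tendsto_lowerbound[OF h_lim])
    have "0 \<le> h \<sigma>" if "1 < \<sigma>" for \<sigma>
    proof -
      have "0 \<le> (\<sigma> - 1) * h \<sigma>" using ge[of \<sigma>] that factor[of \<sigma>] by linarith
      then show ?thesis using that by (simp add: zero_le_mult_iff)
    qed
    then show "eventually (\<lambda>\<sigma>. 0 \<le> h \<sigma>) (at_right 1)"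
      by (intro eventually_at_rightI[of 1 2]) auto
  qed simp
  moreover have "2 * P - 2 * p \<le> 0"
  proof (rule tendsto_upperbound[OF h_lim])
    have "h \<sigma> \<le> 0" if "0 < \<sigma>" "\<sigma> < 1" for \<sigma>
    proof -
      have "0 \<le> (\<sigma> - 1) * h \<sigma>" using ge[of \<sigma>] that factor[of \<sigma>] by linarith
      then show ?thesis using that by (simp add: zero_le_mult_iff)
    qed
    then show "eventually (\<lambda>\<sigma>. h \<sigma> \<le> 0) (at_left 1)"
      by (intro eventually_at_leftI[of 0 1]) auto
  qed simp
  ultimately show ?thesis by linarith
qed

lemma lsc_fun_eventually_greater:
  assumes "lsc_fun f" "c < f x"
  shows "eventually (\<lambda>y. c < f y) (nhds x)"
proof -
  have "eventually (\<lambda>y. c < f y) (at x)"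
    using assms le_Liminf_iff unfolding lsc_fun_def by (metis order.strict_trans2)
  then show ?thesis using assms(2) unfolding eventually_at_filter by (auto elim: eventually_mono)
qed

lemma lsc_fun_add_continuous:
  fixes f :: "'a::metric_space \<Rightarrow> ereal"
  assumes lsc: "lsc_fun f" and not_MInf: "\<And>y. f y \<noteq> -\<infinity>" and cont: "continuous_on UNIV h"
  shows "lsc_fun (\<lambda>y. f y + ereal (h y))"
  unfolding lsc_fun_def
proof (intro allI, subst le_Liminf_iff, intro allI impI)
  fix x and c :: ereal assume c: "c < f x + ereal (h x)"
  show "eventually (\<lambda>y. c < f y + ereal (h y)) (at x)"
  proof (cases c)
    case (real C)
    then obtain D where D: "C - h x < D" "ereal D < f x"
      using c ereal_dense2[of "ereal (C - h x)" "f x"] by (cases "f x") auto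
    have "eventually (\<lambda>y. ereal D < f y) (at x)"
      using lsc_fun_eventually_greater[OF lsc D(2)] by (auto simp: eventually_at_filter elim: eventually_mono)
    moreover have "eventually (\<lambda>y. dist (h y) (h x) < D - (C - h x)) (at x)"
      using cont D(1) by (intro tendstoD) (auto simp: continuous_on_def)
    ultimately show ?thesis
    proof eventually_elim
      case (elim y)
      then have "C < D + h y" by (auto simp: dist_real_def abs_less_iff)
      then show ?case using elim real by (cases "f y") auto
    qed
  next
    case MInf
    have "-\<infinity> < f y + ereal (h y)" for y using not_MInf[of y] by (cases "f y") auto
    then show ?thesis using MInf by simp
  qed (use c in simp)
qed

lemma lsc_fun_attains_min:
  fixes g :: "'a::metric_space \<Rightarrow> ereal"
  assumes lsc: "lsc_fun g" and K: "compact K" "K \<noteq> {}"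
  obtains u where "u \<in> K" "\<And>y. y \<in> K \<Longrightarrow> g u \<le> g y"
proof -
  define m where "m = Inf (g ` K)"
  have "\<exists>vs. (\<forall>n. vs n \<in> g ` K) \<and> vs \<longlonglongrightarrow> m"
    using Inf_as_limit[of "g ` K"] K(2) unfolding m_def by simp
  then obtain vs where vs: "\<And>n. vs n \<in> g ` K" "vs \<longlonglongrightarrow> m" by blast
  have "\<forall>n. \<exists>y. y \<in> K \<and> g y = vs n" using vs(1) by (metis imageE)
  then obtain ys where ys: "\<And>n. ys n \<in> K" "\<And>n. g (ys n) = vs n" by metis
  obtain l s where l: "l \<in> K" "strict_mono s" "(ys \<circ> s) \<longlonglongrightarrow> l"
    using compact_imp_seq_compact[OF K(1)] ys(1) unfolding seq_compact_def by meson
  have "g l \<le> m"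
  proof (rule ccontr)
    assume "\<not> g l \<le> m"
    then have "m < g l" by simp
    then obtain c where c: "m < c" "c < g l" using dense by blast
    have "eventually (\<lambda>n. c < g ((ys \<circ> s) n)) sequentially"
      using lsc_fun_eventually_greater[OF lsc c(2)] l(3) by (rule eventually_compose_filterlim)
    moreover have "eventually (\<lambda>n. g ((ys \<circ> s) n) < c) sequentially"
      using order_tendstoD(2)[OF LIMSEQ_subseq_LIMSEQ[OF vs(2) l(2)] c(1)] by (simp add: o_def ys(2))
    ultimately have "eventually (\<lambda>n. False) sequentially" by eventually_elim auto
    then show False by simp
  qed
  show ?thesis
  proof (rule that[OF l(1)])
    fix y assume "y \<in> K"
    then have "m \<le> g y" unfolding m_def by (rule INF_lower)
    with \<open>g l \<le> m\<close> show "g l \<le> g y" by (rule order_trans)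
  qed
qed

lemma proximal_minimizer_on_cball:
  fixes f :: "'a::euclidean_space \<Rightarrow> ereal"
  assumes lsc: "lsc_fun f" and not_MInf: "\<And>y. f y \<noteq> -\<infinity>" and "x0 \<in> cball c \<rho>"
  obtains u where "u \<in> cball c \<rho>" "\<And>y. y \<in> cball c \<rho> \<Longrightarrow>
    f u + ereal (\<beta> / 2 * (norm (u - x0))\<^sup>2) \<le> f y + ereal (\<beta> / 2 * (norm (y - x0))\<^sup>2)"
proof -
  have "lsc_fun (\<lambda>y. f y + ereal (\<beta> / 2 * (norm (y - x0))\<^sup>2))"
    using lsc not_MInf by (intro lsc_fun_add_continuous) (auto intro!: continuous_intros)
  moreover have "cball c \<rho> \<noteq> {}" using \<open>x0 \<in> cball c \<rho>\<close> by blast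
  ultimately show ?thesis by (rule lsc_fun_attains_min[OF _ compact_cball]) (rule that)
qed

lemma not_strong_local_minE:
  fixes f :: "'a::real_normed_vector \<Rightarrow> ereal"
  assumes not_min: "\<not> strong_local_min f xb" and F0: "f xb = ereal F0" and "\<rho> > 0"
  obtains xs e where "\<And>k. xs k \<noteq> xb" "\<And>k. norm (xs k - xb) < \<rho>" "xs \<longlonglongrightarrow> xb"
    "\<And>k. f (xs k) \<le> ereal (F0 + e k / 2 * (norm (xs k - xb))\<^sup>2)" "e \<longlonglongrightarrow> 0" "\<And>k. e k \<le> 1"
proof -
  define e where "e k = 1 / (1 + real k)" for k
  have e: "e \<longlonglongrightarrow> 0" "\<And>k. 0 < e k" "\<And>k. e k \<le> 1"
    unfolding e_def using LIMSEQ_inverse_real_of_nat by (auto simp: inverse_eq_divide)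
  have "\<exists>x. x \<in> ball xb (min \<rho> (e k)) \<and> \<not> ereal (e k / 2 * (norm (x - xb))\<^sup>2) \<le> f x - f xb" for k
  proof -
    have "min \<rho> (e k) > 0" using e(2)[of k] \<open>\<rho> > 0\<close> by simp
    then show ?thesis using not_min e(2)[of k] unfolding strong_local_min_def by blast
  qed
  then obtain xs where xs: "\<And>k. xs k \<in> ball xb (min \<rho> (e k))"
    "\<And>k. \<not> ereal (e k / 2 * (norm (xs k - xb))\<^sup>2) \<le> f (xs k) - f xb"
    by metis
  show ?thesis
  proof (rule that[OF _ _ _ _ e(1,3)])
    show "xs k \<noteq> xb" for k using xs(2)[of k] F0 by auto
    show "norm (xs k - xb) < \<rho>" for k
      using xs(1)[of k] by (auto simp: dist_norm norm_minus_commute)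
    have "norm (xs k - xb) \<le> e k" for k
      using xs(1)[of k] by (auto simp: dist_norm norm_minus_commute)
    then have "(\<lambda>k. norm (xs k - xb)) \<longlonglongrightarrow> 0"
      by (intro tendsto_sandwich[OF _ _ tendsto_const e(1)]) auto
    then show "xs \<longlonglongrightarrow> xb" by (simp add: tendsto_norm_zero_iff LIM_zero_iff)
    show "f (xs k) \<le> ereal (F0 + e k / 2 * (norm (xs k - xb))\<^sup>2)" for k
      using xs(2)[of k] F0 by (cases "f (xs k)") (auto simp: algebra_simps)
  qed
qed

lemma rescaled_proximal_points_subseq:
  fixes xs us :: "nat \<Rightarrow> 'a::euclidean_space"
  assumes xs: "\<And>k. xs k \<noteq> xb" and "q < 1"
    and near: "\<And>k. (norm (us k - xs k))\<^sup>2 \<le> q * (norm (xs k - xb))\<^sup>2"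
  obtains s w w0 where "strict_mono s"
    "(\<lambda>k. inverse (norm (xs (s k) - xb)) *\<^sub>R (us (s k) - xb)) \<longlonglongrightarrow> w"
    "(\<lambda>k. inverse (norm (xs (s k) - xb)) *\<^sub>R (xs (s k) - xb)) \<longlonglongrightarrow> w0"
    "norm w0 = 1" "(norm (w - w0))\<^sup>2 \<le> q"
proof -
  define wu where "wu k = inverse (norm (xs k - xb)) *\<^sub>R (us k - xb)" for k
  define wx where "wx k = inverse (norm (xs k - xb)) *\<^sub>R (xs k - xb)" for k
  have wx_norm: "norm (wx k) = 1" for k using xs[of k] by (simp add: wx_def)
  have wu_wx: "(norm (wu k - wx k))\<^sup>2 \<le> q" for k
  proof -
    have "wu k - wx k = inverse (norm (xs k - xb)) *\<^sub>R (us k - xs k)"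
      by (simp add: wu_def wx_def algebra_simps)
    then have "(norm (wu k - wx k))\<^sup>2 = (norm (us k - xs k))\<^sup>2 / (norm (xs k - xb))\<^sup>2"
      by (simp add: power_mult_distrib power_inverse divide_inverse)
    also have "\<dots> \<le> q" using near[of k] xs[of k] by (simp add: divide_le_eq)
    finally show ?thesis .
  qed
  have wu_bound: "norm (wu k) \<le> 2" for k
  proof -
    have "(norm (wu k - wx k))\<^sup>2 \<le> 1\<^sup>2" using wu_wx[of k] \<open>q < 1\<close> by simp
    then have "norm (wu k - wx k) \<le> 1" by (rule power2_le_imp_le) simp
    then show ?thesis using norm_triangle_ineq[of "wu k - wx k" "wx k"] wx_norm[of k] by simp
  qed
  have "norm (wu k, wx k) \<le> 3" for k
    using norm_Pair_le[of "wu k" "wx k"] wx_norm[of k] wu_bound[of k] by simp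
  then have "bounded (range (\<lambda>k. (wu k, wx k)))" unfolding bounded_iff by blast
  then obtain l s where s: "strict_mono s" "((\<lambda>k. (wu k, wx k)) \<circ> s) \<longlonglongrightarrow> l"
    using bounded_imp_convergent_subsequence by blast
  have wu_lim: "(\<lambda>k. wu (s k)) \<longlonglongrightarrow> fst l" and wx_lim: "(\<lambda>k. wx (s k)) \<longlonglongrightarrow> snd l"
    using tendsto_fst[OF s(2)] tendsto_snd[OF s(2)] by (simp_all add: o_def)
  show ?thesis
  proof (rule that[OF s(1)])
    show "(\<lambda>k. inverse (norm (xs (s k) - xb)) *\<^sub>R (us (s k) - xb)) \<longlonglongrightarrow> fst l"
      "(\<lambda>k. inverse (norm (xs (s k) - xb)) *\<^sub>R (xs (s k) - xb)) \<longlonglongrightarrow> snd l"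
      using wu_lim wx_lim by (simp_all add: wu_def wx_def)
    show "norm (snd l) = 1"
      using tendsto_norm[OF wx_lim] wx_norm by (simp add: LIMSEQ_const_iff)
    show "(norm (fst l - snd l))\<^sup>2 \<le> q"
      using tendsto_power[OF tendsto_norm[OF tendsto_diff[OF wu_lim wx_lim]], of 2] wu_wx
      by (intro LIMSEQ_le_const2) auto
  qed
qed

lemma direction_of_proximal_points:
  fixes f :: "'a::euclidean_space \<Rightarrow> ereal"
  assumes F0: "f xb = ereal F0" and not_MInf: "\<And>y. f y \<noteq> -\<infinity>"
    and "q < 1" and e: "e \<longlonglongrightarrow> 0"
    and xs: "\<And>k. xs k \<noteq> xb" "xs \<longlonglongrightarrow> xb"
    and near: "\<And>k. (norm (us k - xs k))\<^sup>2 \<le> q * (norm (xs k - xb))\<^sup>2"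
    and low: "\<And>k. f (us k) \<le> ereal (F0 + e k / 2 * (norm (xs k - xb))\<^sup>2)"
    and prox: "\<And>k. - \<beta> *\<^sub>R (us k - xs k) \<in> prox_subdiff f (us k)"
  obtains w z where "w \<noteq> 0" "z \<in> graphical_deriv (prox_subdiff f) xb 0 w"
    "second_subderiv f xb 0 w \<le> 0"
proof -
  define t where "t k = norm (xs k - xb)" for k
  define wu where "wu k = inverse (t k) *\<^sub>R (us k - xb)" for k
  define wx where "wx k = inverse (t k) *\<^sub>R (xs k - xb)" for k
  obtain s w w0 where s: "strict_mono s" and wu_lim: "(\<lambda>k. wu (s k)) \<longlonglongrightarrow> w"
    and wx_lim: "(\<lambda>k. wx (s k)) \<longlonglongrightarrow> w0" and "norm w0 = 1" "(norm (w - w0))\<^sup>2 \<le> q"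
    unfolding wu_def wx_def t_def by (rule rescaled_proximal_points_subseq[OF xs(1) \<open>q < 1\<close> near])
  have t: "t k > 0" for k using xs(1) by (simp add: t_def)
  have ts_lim: "(\<lambda>k. t (s k)) \<longlonglongrightarrow> 0"
    using LIMSEQ_subseq_LIMSEQ[OF tendsto_norm[OF LIM_zero[OF xs(2)]] s] by (simp add: t_def o_def)
  have us_eq: "us k = xb + t k *\<^sub>R wu k" for k using t[of k] by (simp add: wu_def)
  show ?thesis
  proof (rule that)
    show "w \<noteq> 0" using \<open>norm w0 = 1\<close> \<open>(norm (w - w0))\<^sup>2 \<le> q\<close> \<open>q < 1\<close> by auto
    show "- \<beta> *\<^sub>R (w - w0) \<in> graphical_deriv (prox_subdiff f) xb 0 w"
    proof (rule graphical_derivI[OF _ ts_lim wu_lim])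
      show "(\<lambda>k. - \<beta> *\<^sub>R (wu (s k) - wx (s k))) \<longlonglongrightarrow> - \<beta> *\<^sub>R (w - w0)"
        by (intro tendsto_intros wu_lim wx_lim)
      show "0 + t (s k) *\<^sub>R (- \<beta> *\<^sub>R (wu (s k) - wx (s k))) \<in> prox_subdiff f (xb + t (s k) *\<^sub>R wu (s k))" for k
        using prox[of "s k"] t[of "s k"] by (simp add: wu_def wx_def algebra_simps)
    qed (use t in simp)
    have "second_dq f xb 0 (t (s k)) (wu (s k)) \<le> ereal (e (s k))" for k
      using low[of "s k"] not_MInf[of "us (s k)"] t[of "s k"]
      by (intro second_dq_le[where f = f and xb = xb, OF F0]) (auto simp: us_eq t_def mult_ac)
    then have "eventually (\<lambda>k. second_dq f xb 0 (t (s k)) (wu (s k)) \<le> ereal (e (s k))) sequentially"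
      by simp
    moreover have "(\<lambda>k. e (s k)) \<longlonglongrightarrow> 0" using LIMSEQ_subseq_LIMSEQ[OF e s] by (simp add: o_def)
    ultimately show "second_subderiv f xb 0 w \<le> 0"
      unfolding zero_ereal_def using t by (intro second_subderiv_le_of_eventually_le[OF _ ts_lim wu_lim])
  qed
qed

lemma proximal_distance_bound:
  fixes r s d t e U F0 :: real
  assumes "0 < r" "0 \<le> s" "s \<le> d + t" "e \<le> 1"
    and "U + (4 * r + 4) / 2 * d\<^sup>2 \<le> F0 + e / 2 * t\<^sup>2" "F0 - r / 2 * s\<^sup>2 \<le> U"
  shows "(2 * r + 4) * d\<^sup>2 \<le> (1 + 2 * r) * t\<^sup>2"
proof -
  have "s\<^sup>2 \<le> 2 * d\<^sup>2 + 2 * t\<^sup>2"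
    using power_mono[of s "d + t" 2] sum_squares_ge_zero[of "d - t" 0] assms(2,3)
    by (simp add: power2_eq_square algebra_simps)
  then have "r / 2 * s\<^sup>2 \<le> r * d\<^sup>2 + r * t\<^sup>2"
    using mult_left_mono[of "s\<^sup>2" "2 * d\<^sup>2 + 2 * t\<^sup>2" "r / 2"] assms(1) by (simp add: algebra_simps)
  moreover have "e / 2 * t\<^sup>2 \<le> t\<^sup>2 / 2" using mult_right_mono[OF assms(4), of "t\<^sup>2"] by simp
  moreover have "(4 * r + 4) / 2 * d\<^sup>2 = 2 * (r * d\<^sup>2) + 2 * d\<^sup>2"
    "(2 * r + 4) * d\<^sup>2 = 2 * (r * d\<^sup>2) + 4 * d\<^sup>2" "(1 + 2 * r) * t\<^sup>2 = t\<^sup>2 + 2 * (r * t\<^sup>2)"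
    by (simp_all add: algebra_simps)
  ultimately show ?thesis using assms(5,6) by linarith
qed

definition second_kind_condition :: "('a::real_inner \<Rightarrow> ereal) \<Rightarrow> 'a \<Rightarrow> real \<Rightarrow> bool" where
  "second_kind_condition f xb \<kappa> \<longleftrightarrow> (\<forall>w \<in> sdom (graphical_deriv (prox_subdiff f) xb 0). norm w = 1 \<longrightarrow>
     (\<exists>z \<in> graphical_deriv (prox_subdiff f) xb 0 w. inner z w \<ge> \<kappa>))"

locale prox_regular_at_zero =
  fixes f :: "'a::euclidean_space \<Rightarrow> ereal" and xb :: 'a and F0 r \<epsilon> :: real
  assumes f_xb: "f xb = ereal F0"
    and zero_in_subdiff: "0 \<in> limiting_subdiff f xb"
    and r_pos: "0 < r" and eps_pos: "0 < \<epsilon>"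
    and prox_ineq: "\<And>x u v A. x \<in> cball xb \<epsilon> \<Longrightarrow> u \<in> cball xb \<epsilon> \<Longrightarrow> f u = ereal A \<Longrightarrow>
      \<bar>A - F0\<bar> < \<epsilon> \<Longrightarrow> v \<in> limiting_subdiff f u \<Longrightarrow> norm v \<le> \<epsilon> \<Longrightarrow>
      ereal (A + inner v (x - u) - r / 2 * (norm (x - u))\<^sup>2) \<le> f x"

lemma prox_regular_at_zeroE:
  assumes "prox_regular_at f xb 0" "f xb = ereal F0" "0 \<in> limiting_subdiff f xb"
  obtains r \<epsilon> where "prox_regular_at_zero f xb F0 r \<epsilon>"
proof -
  obtain r \<epsilon> where "r > 0" "\<epsilon> > 0" and ineq: "\<forall>x u v. x \<in> cball xb \<epsilon> \<longrightarrow> u \<in> cball xb \<epsilon> \<longrightarrow>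
      \<bar>f u - f xb\<bar> < ereal \<epsilon> \<longrightarrow> v \<in> limiting_subdiff f u \<longrightarrow> v \<in> cball 0 \<epsilon> \<longrightarrow>
      f u + ereal (inner v (x - u)) - ereal (r / 2 * (norm (x - u))\<^sup>2) \<le> f x"
    using assms(1) unfolding prox_regular_at_def by blast
  have "prox_regular_at_zero f xb F0 r \<epsilon>"
  proof
    fix x u v A
    assume "x \<in> cball xb \<epsilon>" "u \<in> cball xb \<epsilon>" "f u = ereal A" "\<bar>A - F0\<bar> < \<epsilon>"
      "v \<in> limiting_subdiff f u" "norm v \<le> \<epsilon>"
    then show "ereal (A + inner v (x - u) - r / 2 * (norm (x - u))\<^sup>2) \<le> f x"
      using ineq[rule_format, of x u v] assms(2) by simp
  qed (use assms(2,3) \<open>r > 0\<close> \<open>\<epsilon> > 0\<close> in auto)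
  then show ?thesis by (rule that)
qed

context prox_regular_at_zero
begin

lemmas second_dq_eq = second_dq_zero_eq[where f = f and xb = xb, OF f_xb]

lemma quadratic_minorant:
  assumes "x \<in> cball xb \<epsilon>"
  shows "ereal (F0 - r / 2 * (norm (x - xb))\<^sup>2) \<le> f x"
  using prox_ineq[OF assms _ f_xb _ zero_in_subdiff] eps_pos by simp

lemma prox_ineq_second_dq:
  assumes t: "t > 0" and v: "t *\<^sub>R z \<in> limiting_subdiff f (xb + t *\<^sub>R w)"
    and A: "f (xb + t *\<^sub>R w) = ereal A" "\<bar>A - F0\<bar> < \<epsilon>"
    and small: "norm (t *\<^sub>R w) \<le> \<epsilon>" "norm (t *\<^sub>R z) \<le> \<epsilon>" "norm (t *\<^sub>R y) \<le> \<epsilon>"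
    and b: "second_dq f xb 0 t y = ereal b"
  shows "(A - F0) / (t\<^sup>2 / 2) \<le> b - 2 * inner z (y - w) + r * (norm (y - w))\<^sup>2"
proof -
  obtain X where X: "f (xb + t *\<^sub>R y) = ereal X" and bX: "b = (X - F0) / (t\<^sup>2 / 2)"
    using b t by (cases "f (xb + t *\<^sub>R y)") (auto simp: second_dq_eq)
  have x_u: "(xb + t *\<^sub>R y) - (xb + t *\<^sub>R w) = t *\<^sub>R (y - w)" by (simp add: algebra_simps)
  have "ereal (A + inner (t *\<^sub>R z) (t *\<^sub>R (y - w)) - r / 2 * (norm (t *\<^sub>R (y - w)))\<^sup>2) \<le> f (xb + t *\<^sub>R y)"
    using prox_ineq[of "xb + t *\<^sub>R y" "xb + t *\<^sub>R w", OF _ _ A v small(2)] small(1,3)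
    unfolding x_u by (simp add: dist_norm)
  then have "A + t\<^sup>2 * inner z (y - w) - r / 2 * (t\<^sup>2 * (norm (y - w))\<^sup>2) \<le> X"
    using X t by (simp add: power_mult_distrib power2_eq_square mult_ac)
  moreover have "t\<^sup>2 / 2 * (b - 2 * inner z (y - w) + r * (norm (y - w))\<^sup>2)
      = X - F0 - t\<^sup>2 * inner z (y - w) + r / 2 * (t\<^sup>2 * (norm (y - w))\<^sup>2)"
    using t unfolding bX by (simp add: field_simps)
  ultimately have "A - F0 \<le> t\<^sup>2 / 2 * (b - 2 * inner z (y - w) + r * (norm (y - w))\<^sup>2)"
    by linarith
  then show ?thesis using t by (simp add: field_simps)
qed

lemma second_subderiv_le_along_graph:
  assumes SC: "subdiff_continuous_at f xb 0"
    and t: "\<And>k. t k > 0" "t \<longlonglongrightarrow> 0" and ws: "ws \<longlonglongrightarrow> w" and zs: "zs \<longlonglongrightarrow> z"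
    and graph: "\<And>k. t k *\<^sub>R zs k \<in> prox_subdiff f (xb + t k *\<^sub>R ws k)"
    and ys: "ys \<longlonglongrightarrow> y" "(\<lambda>k. second_dq f xb 0 (t k) (ys k)) \<longlonglongrightarrow> ereal L"
  shows "second_subderiv f xb 0 w \<le> ereal (L - 2 * inner z (y - w) + r * (norm (y - w))\<^sup>2)"
proof -
  define A where "A k = real_of_ereal (f (xb + t k *\<^sub>R ws k))" for k
  define B where "B k = real_of_ereal (second_dq f xb 0 (t k) (ys k))" for k
  have fA: "f (xb + t k *\<^sub>R ws k) = ereal (A k)" for k
    using graph[of k] unfolding prox_subdiff_def A_def by (cases "f (xb + t k *\<^sub>R ws k)") auto
  have lim: "t k *\<^sub>R zs k \<in> limiting_subdiff f (xb + t k *\<^sub>R ws k)" for k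
    using graph prox_subdiff_subset_limiting_subdiff by blast
  have tws: "(\<lambda>k. t k *\<^sub>R ws k) \<longlonglongrightarrow> 0" and tzs: "(\<lambda>k. t k *\<^sub>R zs k) \<longlonglongrightarrow> 0"
    and tys: "(\<lambda>k. t k *\<^sub>R ys k) \<longlonglongrightarrow> 0"
    using tendsto_scaleR[OF t(2) ws] tendsto_scaleR[OF t(2) zs] tendsto_scaleR[OF t(2) ys(1)] by simp_all
  have "(\<lambda>k. f (xb + t k *\<^sub>R ws k)) \<longlonglongrightarrow> f xb"
    using SC tendsto_add[OF tendsto_const tws, of xb] tzs lim unfolding subdiff_continuous_at_def by auto
  then have A_lim: "A \<longlonglongrightarrow> F0" using fA f_xb by simp
  have "eventually (\<lambda>k. norm (t k *\<^sub>R ws k) \<le> \<epsilon> \<and> norm (t k *\<^sub>R zs k) \<le> \<epsilon> \<and> norm (t k *\<^sub>R ys k) \<le> \<epsilon>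
      \<and> \<bar>A k - F0\<bar> < \<epsilon> \<and> second_dq f xb 0 (t k) (ys k) = ereal (B k)) sequentially"
  proof (intro eventually_conj)
    show "eventually (\<lambda>k. norm (t k *\<^sub>R ws k) \<le> \<epsilon>) sequentially"
      "eventually (\<lambda>k. norm (t k *\<^sub>R zs k) \<le> \<epsilon>) sequentially"
      "eventually (\<lambda>k. norm (t k *\<^sub>R ys k) \<le> \<epsilon>) sequentially"
      using tendstoD[OF tws eps_pos] tendstoD[OF tzs eps_pos] tendstoD[OF tys eps_pos]
      by (auto elim: eventually_mono)
    show "eventually (\<lambda>k. \<bar>A k - F0\<bar> < \<epsilon>) sequentially"
      using tendstoD[OF A_lim eps_pos] by (simp add: dist_real_def)
    show "eventually (\<lambda>k. second_dq f xb 0 (t k) (ys k) = ereal (B k)) sequentially"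
      unfolding B_def by (rule eventually_mono[OF eventually_finite[OF _ ys(2)]]) (simp_all add: ereal_real')
  qed
  then have "eventually (\<lambda>k. second_dq f xb 0 (t k) (ws k)
      \<le> ereal (B k - 2 * inner (zs k) (ys k - ws k) + r * (norm (ys k - ws k))\<^sup>2)) sequentially"
  proof eventually_elim
    case (elim k)
    then show ?case
      using prox_ineq_second_dq[OF t(1) lim fA] t(1)[of k] fA[of k]
      by (simp add: second_dq_eq)
  qed
  moreover have "B \<longlonglongrightarrow> L" unfolding B_def using lim_real_of_ereal[OF ys(2)] .
  ultimately show ?thesis
    by (intro second_subderiv_le_of_eventually_le[OF t ws]) (auto intro!: tendsto_intros ys(1) ws zs)
qed

lemma second_subderiv_eq_inner:
  assumes SC: "subdiff_continuous_at f xb 0" and TE: "twice_epi_diff_at f xb 0"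
    and z: "z \<in> graphical_deriv (prox_subdiff f) xb 0 w"
  shows "second_subderiv f xb 0 w = ereal (inner z w)"
proof -
  obtain t ws zs where t: "\<And>k. t k > 0" "t \<longlonglongrightarrow> 0" and ws: "ws \<longlonglongrightarrow> w" and zs: "zs \<longlonglongrightarrow> z"
    and graph: "\<And>k. t k *\<^sub>R zs k \<in> prox_subdiff f (xb + t k *\<^sub>R ws k)"
    using z by (elim graphical_derivE) auto
  note along_graph = second_subderiv_le_along_graph[OF SC t ws zs graph]
  have "second_dq f xb 0 (t k) 0 = ereal 0" for k
    using t(1)[of k] by (simp add: second_dq_eq f_xb zero_ereal_def)
  then have "second_subderiv f xb 0 w \<le> ereal (2 * inner z w + r * (norm w)\<^sup>2)"
    using along_graph[of "\<lambda>k. 0" 0 0] by simp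
  moreover have "ereal (- r * (norm w)\<^sup>2) \<le> second_subderiv f xb 0 w"
    using quadratic_minorant eps_pos
    by (intro second_subderiv_ge_of_quadratic_minorant[where f = f and xb = xb, OF f_xb eps_pos]) auto
  ultimately obtain P where P: "second_subderiv f xb 0 w = ereal P"
    by (cases "second_subderiv f xb 0 w") auto
  have "P \<le> \<sigma>\<^sup>2 * P - 2 * (\<sigma> - 1) * inner z w + r * (norm w)\<^sup>2 * (\<sigma> - 1)\<^sup>2" if "\<sigma> > 0" for \<sigma>
  proof -
    have "\<exists>ys. ys \<longlonglongrightarrow> w \<and> (\<lambda>k. second_dq f xb 0 (\<sigma> * t k) (ys k)) \<longlonglongrightarrow> second_subderiv f xb 0 w"
      using TE t(1) \<open>\<sigma> > 0\<close> tendsto_mult_left_zero[OF t(2), of \<sigma>]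
      unfolding twice_epi_diff_at_def by simp
    then obtain ys where ys: "ys \<longlonglongrightarrow> w" "(\<lambda>k. second_dq f xb 0 (\<sigma> * t k) (ys k)) \<longlonglongrightarrow> ereal P"
      using P by auto
    have "(\<lambda>k. second_dq f xb 0 (t k) (\<sigma> *\<^sub>R ys k)) \<longlonglongrightarrow> ereal (\<sigma>\<^sup>2 * P)"
      using tendsto_cmult_ereal[OF _ ys(2), of "ereal (\<sigma>\<^sup>2)"]
      by (simp add: second_dq_scaleR[where f = f and xb = xb, OF f_xb t(1) \<open>\<sigma> > 0\<close>])
    from along_graph[OF tendsto_scaleR[OF tendsto_const ys(1)] this]
    have "P \<le> \<sigma>\<^sup>2 * P - 2 * inner z ((\<sigma> - 1) *\<^sub>R w) + r * (norm ((\<sigma> - 1) *\<^sub>R w))\<^sup>2"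
      by (simp add: P scaleR_diff_left)
    moreover have "2 * inner z ((\<sigma> - 1) *\<^sub>R w) = 2 * (\<sigma> - 1) * inner z w" by simp
    moreover have "r * (norm ((\<sigma> - 1) *\<^sub>R w))\<^sup>2 = r * (norm w)\<^sup>2 * (\<sigma> - 1)\<^sup>2"
      by (simp add: power_mult_distrib)
    ultimately show ?thesis by (simp only: mult.assoc)
  qed
  then have "inner z w = P" by (rule eq_of_quadratic_ge_at_one)
  then show ?thesis using P by simp
qed

lemma proximal_point:
  assumes lsc: "lsc_fun f" and not_MInf: "\<And>y. f y \<noteq> -\<infinity>"
    and t: "t = norm (x0 - xb)" "0 < t" "3 * t \<le> \<epsilon>" and "e \<le> 1"
    and fx0: "f x0 \<le> ereal (F0 + e / 2 * t\<^sup>2)"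
  obtains u where "(norm (u - x0))\<^sup>2 \<le> (1 + 2 * r) / (2 * r + 4) * t\<^sup>2"
    "f u \<le> ereal (F0 + e / 2 * t\<^sup>2)" "- (4 * r + 4) *\<^sub>R (u - x0) \<in> prox_subdiff f u"
proof -
  \<comment> \<open>\<beta> is large enough to keep the minimiser within distance t of x0, hence inside the ball.\<close>
  define \<beta> where "\<beta> = 4 * r + 4"
  define K where "K = cball xb (3 * t)"
  have x0K: "x0 \<in> K" unfolding K_def using t by (simp add: dist_norm norm_minus_commute)
  then obtain u where uK: "u \<in> K" and u_min: "\<And>y. y \<in> K \<Longrightarrow>
      f u + ereal (\<beta> / 2 * (norm (u - x0))\<^sup>2) \<le> f y + ereal (\<beta> / 2 * (norm (y - x0))\<^sup>2)"
    unfolding K_def by (rule proximal_minimizer_on_cball[where \<beta> = \<beta>, OF lsc not_MInf]) blast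
  define d where "d = norm (u - x0)"
  define s where "s = norm (u - xb)"
  have fu: "f u + ereal (\<beta> / 2 * d\<^sup>2) \<le> ereal (F0 + e / 2 * t\<^sup>2)"
    using u_min[OF x0K] fx0 by (simp add: d_def)
  then obtain U where U: "f u = ereal U" using not_MInf[of u] by (cases "f u") auto
  have U_upper: "U + \<beta> / 2 * d\<^sup>2 \<le> F0 + e / 2 * t\<^sup>2" using fu U by simp
  have "s \<le> 3 * t" using uK by (simp add: K_def s_def dist_norm norm_minus_commute)
  then have U_lower: "F0 - r / 2 * s\<^sup>2 \<le> U"
    using quadratic_minorant[of u] t U by (simp add: s_def dist_norm norm_minus_commute)
  have "0 \<le> s" "s \<le> d + t"
    unfolding s_def d_def t(1) using norm_triangle_ineq[of "u - x0" "x0 - xb"] by simp_all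
  then have d_bound: "(2 * r + 4) * d\<^sup>2 \<le> (1 + 2 * r) * t\<^sup>2"
    using proximal_distance_bound[OF r_pos _ _ \<open>e \<le> 1\<close> U_upper[unfolded \<beta>_def] U_lower] by blast
  moreover have "(1 + 2 * r) * t\<^sup>2 < (2 * r + 4) * t\<^sup>2" using t(2) by simp
  ultimately have "(2 * r + 4) * d\<^sup>2 < (2 * r + 4) * t\<^sup>2" by linarith
  then have "d\<^sup>2 < t\<^sup>2" using r_pos by simp
  then have "d < t" using t(2) by (simp add: power2_less_imp_less)
  then have "s < 3 * t" using \<open>s \<le> d + t\<close> t(2) by simp
  have "- \<beta> *\<^sub>R (u - x0) \<in> prox_subdiff f u"
  proof (rule prox_subdiff_of_proximal_local_min[where f = f and u = u, OF U])
    show "3 * t - s > 0" using \<open>s < 3 * t\<close> by simp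
    fix y assume "y \<in> ball u (3 * t - s)"
    then have "y \<in> K"
      using dist_triangle[of xb y u] by (simp add: K_def s_def dist_norm norm_minus_commute)
    then show "f u + ereal (\<beta> / 2 * (norm (u - x0))\<^sup>2) \<le> f y + ereal (\<beta> / 2 * (norm (y - x0))\<^sup>2)"
      by (rule u_min)
  qed
  moreover have "(norm (u - x0))\<^sup>2 \<le> (1 + 2 * r) / (2 * r + 4) * t\<^sup>2"
    using d_bound r_pos by (simp add: d_def field_simps)
  moreover have "f u \<le> ereal (F0 + e / 2 * t\<^sup>2)"
  proof -
    have "0 \<le> \<beta> / 2 * d\<^sup>2" using r_pos by (simp add: \<beta>_def)
    then show ?thesis using U_upper U by simp
  qed
  ultimately show ?thesis using that unfolding \<beta>_def by blast
qed

lemma second_subderiv_ge_of_second_kind_condition: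
  assumes SC: "subdiff_continuous_at f xb 0" and TE: "twice_epi_diff_at f xb 0"
    and cond: "second_kind_condition f xb \<kappa>"
    and z: "z \<in> graphical_deriv (prox_subdiff f) xb 0 w"
  shows "ereal (\<kappa> * (norm w)\<^sup>2) \<le> second_subderiv f xb 0 w"
proof (cases "w = 0")
  case False
  define n where "n = norm w"
  have n: "n > 0" using False by (simp add: n_def)
  have "inverse n *\<^sub>R z \<in> graphical_deriv (prox_subdiff f) xb 0 (inverse n *\<^sub>R w)"
    using graphical_deriv_scaleR[OF z] n by simp
  then have "inverse n *\<^sub>R w \<in> sdom (graphical_deriv (prox_subdiff f) xb 0)"
    unfolding sdom_def by blast
  moreover have "norm (inverse n *\<^sub>R w) = 1" using n by (simp add: n_def)
  ultimately obtain z' where z': "z' \<in> graphical_deriv (prox_subdiff f) xb 0 (inverse n *\<^sub>R w)"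
    "inner z' (inverse n *\<^sub>R w) \<ge> \<kappa>"
    using cond unfolding second_kind_condition_def by blast
  have "n *\<^sub>R z' \<in> graphical_deriv (prox_subdiff f) xb 0 w"
    using graphical_deriv_scaleR[OF z'(1) n] n by simp
  then have "second_subderiv f xb 0 w = ereal (n\<^sup>2 * inner z' (inverse n *\<^sub>R w))"
    using second_subderiv_eq_inner[OF SC TE] n by (simp add: power2_eq_square)
  then show ?thesis using z'(2) n by (simp add: n_def)
next
  case True
  then show ?thesis using second_subderiv_eq_inner[OF SC TE z] by simp
qed

lemma strong_local_min_imp_second_kind_condition:
  assumes SC: "subdiff_continuous_at f xb 0" and TE: "twice_epi_diff_at f xb 0"
    and "strong_local_min f xb"
  shows "\<exists>\<kappa>>0. second_kind_condition f xb \<kappa>"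
proof -
  obtain \<kappa> \<delta> where "\<kappa> > 0" "\<delta> > 0"
    and min: "\<And>x. x \<in> ball xb \<delta> \<Longrightarrow> ereal (\<kappa> / 2 * (norm (x - xb))\<^sup>2) \<le> f x - f xb"
    using assms(3) unfolding strong_local_min_def by blast
  have "ereal (\<kappa> * (norm w)\<^sup>2) \<le> second_subderiv f xb 0 w" for w
  proof (rule second_subderiv_ge_of_quadratic_minorant[where f = f and xb = xb, OF f_xb \<open>\<delta> > 0\<close>])
    fix x assume "x \<in> ball xb \<delta>"
    then show "ereal (F0 + \<kappa> / 2 * (norm (x - xb))\<^sup>2) \<le> f x"
      using min[of x] f_xb by (cases "f x") auto
  qed
  then have "\<kappa> \<le> inner z w" if "z \<in> graphical_deriv (prox_subdiff f) xb 0 w" "norm w = 1" for z w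
  proof -
    have "ereal \<kappa> \<le> ereal (inner z w)"
      using \<open>ereal (\<kappa> * (norm w)\<^sup>2) \<le> _\<close> second_subderiv_eq_inner[OF SC TE that(1)] that(2) by simp
    then show ?thesis by simp
  qed
  then show ?thesis using \<open>\<kappa> > 0\<close> unfolding second_kind_condition_def sdom_def by blast
qed

lemma second_kind_condition_imp_strong_local_min:
  assumes lsc: "lsc_fun f" and not_MInf: "\<And>y. f y \<noteq> -\<infinity>"
    and SC: "subdiff_continuous_at f xb 0" and TE: "twice_epi_diff_at f xb 0"
    and "\<kappa> > 0" and cond: "second_kind_condition f xb \<kappa>"
  shows "strong_local_min f xb"
proof (rule ccontr)
  assume not_min: "\<not> strong_local_min f xb"
  have eps3: "\<epsilon> / 3 > 0" using eps_pos by simp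
  obtain xs e where xs: "\<And>k. xs k \<noteq> xb" "\<And>k. norm (xs k - xb) < \<epsilon> / 3" "xs \<longlonglongrightarrow> xb"
    and fxs: "\<And>k. f (xs k) \<le> ereal (F0 + e k / 2 * (norm (xs k - xb))\<^sup>2)"
    and e: "e \<longlonglongrightarrow> 0" "\<And>k. e k \<le> 1"
    using not_strong_local_minE[OF not_min f_xb eps3] by metis
  have "\<exists>u. (norm (u - xs k))\<^sup>2 \<le> (1 + 2 * r) / (2 * r + 4) * (norm (xs k - xb))\<^sup>2
      \<and> f u \<le> ereal (F0 + e k / 2 * (norm (xs k - xb))\<^sup>2) \<and> - (4 * r + 4) *\<^sub>R (u - xs k) \<in> prox_subdiff f u" for k
  proof -
    have "0 < norm (xs k - xb)" "3 * norm (xs k - xb) \<le> \<epsilon>" using xs(1,2)[of k] by auto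
    from proximal_point[OF lsc not_MInf refl this e(2) fxs] show ?thesis by blast
  qed
  then have "\<exists>us. \<forall>k. (norm (us k - xs k))\<^sup>2 \<le> (1 + 2 * r) / (2 * r + 4) * (norm (xs k - xb))\<^sup>2
      \<and> f (us k) \<le> ereal (F0 + e k / 2 * (norm (xs k - xb))\<^sup>2)
      \<and> - (4 * r + 4) *\<^sub>R (us k - xs k) \<in> prox_subdiff f (us k)"
    by (intro choice allI)
  then obtain us where us: "\<And>k. (norm (us k - xs k))\<^sup>2 \<le> (1 + 2 * r) / (2 * r + 4) * (norm (xs k - xb))\<^sup>2"
    "\<And>k. f (us k) \<le> ereal (F0 + e k / 2 * (norm (xs k - xb))\<^sup>2)"
    "\<And>k. - (4 * r + 4) *\<^sub>R (us k - xs k) \<in> prox_subdiff f (us k)"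
    by blast
  have "(1 + 2 * r) / (2 * r + 4) < 1" using r_pos by simp
  then obtain w z where "w \<noteq> 0" and z: "z \<in> graphical_deriv (prox_subdiff f) xb 0 w"
    and w_le: "second_subderiv f xb 0 w \<le> 0"
    using direction_of_proximal_points[where f = f and xb = xb, OF f_xb not_MInf _ e(1) xs(1,3) us]
    by metis
  have "ereal (\<kappa> * (norm w)\<^sup>2) \<le> 0"
    using second_subderiv_ge_of_second_kind_condition[OF SC TE cond z] w_le by (rule order_trans)
  then show False using \<open>\<kappa> > 0\<close> \<open>w \<noteq> 0\<close> by (simp add: zero_ereal_def mult_le_0_iff)
qed

end

theorem corollary3p9:
  fixes f :: "'a::euclidean_space \<Rightarrow> ereal" and xb :: 'a
  assumes "proper_fun f" and "lsc_fun f" and "xb \<in> edom f"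
    and "0 \<in> limiting_subdiff f xb"
    and "subdiff_continuous_at f xb 0" and "prox_regular_at f xb 0"
    and "twice_epi_diff_at f xb 0"
  shows "strong_local_min f xb \<longleftrightarrow>
    (\<exists>\<kappa>>0. \<forall>w \<in> sdom (graphical_deriv (prox_subdiff f) xb 0). norm w = 1 \<longrightarrow>
       (\<exists>z \<in> graphical_deriv (prox_subdiff f) xb 0 w. inner z w \<ge> \<kappa>))"
proof -
  have not_MInf: "\<And>y. f y \<noteq> -\<infinity>" using assms(1) unfolding proper_fun_def by blast
  obtain F0 where F0: "f xb = ereal F0"
    using assms(3) not_MInf[of xb] unfolding edom_def by (cases "f xb") auto
  obtain r \<epsilon> where "prox_regular_at_zero f xb F0 r \<epsilon>"
    using prox_regular_at_zeroE[OF assms(6) F0 assms(4)] .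
  then interpret prox_regular_at_zero f xb F0 r \<epsilon> .
  show ?thesis
    using strong_local_min_imp_second_kind_condition[OF assms(5,7)]
      second_kind_condition_imp_strong_local_min[OF assms(2) not_MInf assms(5,7)]
    unfolding second_kind_condition_def by blast
qed

end
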